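(* Let $U:[1,\infty)\to\mathbb R_+$ be increasing to infinity, continuously differentiable, and regularly varying with index $\gamma\ge0$. For $t$ with $U(t)>1$, let $m(t)$ be the $y\ge 1$ such that $U(t/y)=y$. Then: (i) $m$ is well-defined and increasing; (ii) $m$ is continuously differentiable; (iii) $m(t)\to\infty$ and $t/m(t)\to\infty$ as $t\to\infty$; (iv) $m$ is regularly varying with index $\gamma/(\gamma+1)$. Moreover, if $U(t)=t^\gamma L(t)$ with $L$ slowly varying, then, letting $L_1(t)=L(t^{1/(1+\gamma)})$ and $L_1^*$ be a De Bruijn conjugate of $L_1$, $$m(t)\sim t^{\gamma/(\gamma+1)}\,L_1^*(t)^{-1/(1+\gamma)}\quad\text{as } t\to\infty.$$
   Context: A measurable $h:\mathbb R_+\to\mathbb R_+$ is regularly varying with index $\alpha$ if $h(tx)/h(t)\to x^\alpha$ as $t\to\infty$ for every $x>0$; slowly varying means index $0$. For $L$ slowly varying, a De Bruijn conjugate is a slowly varying function $L^*$ with $L^*(x)L(xL^*(x))\to1$ and $L(x)L^*(xL(x))\to1$ as $x\to\infty$ (it exists and is unique up to asymptotic equivalence). $a\sim b$ means $a/b\to1$. *)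

theory Defs
  imports "HOL-Analysis.Analysis" "HOL-Library.Landau_Symbols"
begin

definition regularly_varying :: "real \<Rightarrow> (real \<Rightarrow> real) \<Rightarrow> bool" where
  "regularly_varying \<alpha> h \<longleftrightarrow>
     (\<exists>a>0. (\<forall>t\<ge>a. h t > 0) \<and> h \<in> borel_measurable (restrict_space lborel {a..})) \<and>
     (\<forall>x>0. ((\<lambda>t. h (t * x) / h t) \<longlongrightarrow> x powr \<alpha>) at_top)"

abbreviation slowly_varying :: "(real \<Rightarrow> real) \<Rightarrow> bool" where
  "slowly_varying h \<equiv> regularly_varying 0 h"

definition debruijn_conjugate :: "(real \<Rightarrow> real) \<Rightarrow> (real \<Rightarrow> real) \<Rightarrow> bool" where
  "debruijn_conjugate L Ls \<longleftrightarrow> slowly_varying Ls \<and>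
     ((\<lambda>x. Ls x * L (x * Ls x)) \<longlongrightarrow> 1) at_top \<and>
     ((\<lambda>x. L x * Ls (x * L x)) \<longlongrightarrow> 1) at_top"

end

theory Submission
  imports Defs
begin

text \<open>For \<open>t \<in> D\<close> the function \<open>y \<mapsto> U (t / y) - y\<close> is continuous and strictly decreasing,
  so it has a unique zero \<open>m t\<close> in \<open>[1, t]\<close>, and the sign of \<open>U (t / a) - a\<close> tells on which side
  of \<open>a\<close> it lies. Everything else is read off the parametrisation by \<open>p = t / m t\<close>: then
  \<open>m t = U p\<close> and \<open>t = p U p\<close>, so \<open>m = U \<circ> \<phi>\<^sup>-\<^sup>1\<close> for the strictly increasing \<open>\<phi> p = p U p\<close>,
  whose derivative \<open>U + p U'\<close> is positive; this gives continuity and differentiability of \<open>m\<close>.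
  As \<open>t \<rightarrow> \<infinity>\<close> also \<open>p \<rightarrow> \<infinity>\<close>, so \<open>U (p x / a) / U p \<rightarrow> (x / a) powr \<gamma>\<close> decides whether
  \<open>m (t x)\<close> lies below or above \<open>a m t\<close>, and \<open>(x / a) powr \<gamma> < a\<close> iff \<open>x powr (\<gamma> / (\<gamma> + 1)) < a\<close>.
  Finally, if \<open>U t = t powr \<gamma> L t\<close> then \<open>t = p powr (1 + \<gamma>) L p\<close> and \<open>m t = p powr \<gamma> L p\<close>, and the
  De Bruijn relation for \<open>L\<^sub>1\<close> at \<open>p powr (1 + \<gamma>)\<close> says \<open>L p L\<^sub>1\<^sup>* t \<rightarrow> 1\<close>.\<close>

lemma powr_ratio_eq:
  fixes x a \<gamma> :: real
  assumes "0 < x" "0 < a" "0 \<le> \<gamma>"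
  shows "(x / a) powr \<gamma> / a = (x powr (\<gamma> / (\<gamma> + 1)) / a) powr (\<gamma> + 1)"
proof -
  have "\<gamma> + 1 \<noteq> 0" using assms by linarith
  then have "(x powr (\<gamma> / (\<gamma> + 1)) / a) powr (\<gamma> + 1) = x powr \<gamma> / a powr (\<gamma> + 1)"
    using assms by (simp add: powr_divide powr_powr)
  also have "\<dots> = (x / a) powr \<gamma> / a"
    using assms by (simp add: powr_add powr_divide)
  finally show ?thesis ..
qed

lemma powr_ratio_less:
  fixes x a \<gamma> :: real
  assumes "0 < x" "0 < a" "0 \<le> \<gamma>" "x powr (\<gamma> / (\<gamma> + 1)) < a"
  shows "(x / a) powr \<gamma> < a"
proof -
  have "(x powr (\<gamma> / (\<gamma> + 1)) / a) powr (\<gamma> + 1) < 1 powr (\<gamma> + 1)"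
    using assms by (intro powr_less_mono2) auto
  then have "(x / a) powr \<gamma> / a < 1"
    using powr_ratio_eq[OF assms(1-3)] by simp
  with assms(2) show ?thesis
    by (simp add: divide_less_eq)
qed

lemma powr_ratio_greater:
  fixes x a \<gamma> :: real
  assumes "0 < x" "0 < a" "0 \<le> \<gamma>" "a < x powr (\<gamma> / (\<gamma> + 1))"
  shows "a < (x / a) powr \<gamma>"
proof -
  have "1 powr (\<gamma> + 1) < (x powr (\<gamma> / (\<gamma> + 1)) / a) powr (\<gamma> + 1)"
    using assms by (intro powr_less_mono2) auto
  then have "1 < (x / a) powr \<gamma> / a"
    using powr_ratio_eq[OF assms(1-3)] by simp
  with assms(2) show ?thesis
    by (simp add: less_divide_eq)
qed

lemma powr_asymp_ratio_eq:
  fixes w A B \<gamma> :: real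
  assumes "0 < w" "0 < A" "0 < B" "0 \<le> \<gamma>"
  shows "w powr \<gamma> * A / ((w powr (1 + \<gamma>) * A) powr (\<gamma> / (\<gamma> + 1)) * B powr (- 1 / (1 + \<gamma>)))
    = (A * B) powr (1 / (1 + \<gamma>))"
proof -
  have "(1 + \<gamma>) * (\<gamma> / (\<gamma> + 1)) = \<gamma>"
    using assms(4) by (simp add: add.commute)
  then have "(w powr (1 + \<gamma>) * A) powr (\<gamma> / (\<gamma> + 1)) = w powr \<gamma> * A powr (\<gamma> / (1 + \<gamma>))"
    using assms by (simp add: powr_mult powr_powr add.commute)
  moreover have "A = A powr (\<gamma> / (1 + \<gamma>)) * A powr (1 / (1 + \<gamma>))"
    using assms by (simp add: powr_add[symmetric] add_divide_distrib[symmetric] add.commute)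
  moreover have "B powr (- 1 / (1 + \<gamma>)) = inverse (B powr (1 / (1 + \<gamma>)))"
    using assms by (simp add: powr_minus[symmetric])
  ultimately show ?thesis
    using assms by (simp add: powr_mult field_simps)
qed

lemma mono_on_deriv_nonneg:
  fixes f :: "real \<Rightarrow> real"
  assumes "mono_on {a..} f" "(f has_real_derivative l) (at x within {a..})" "a \<le> x"
  shows "0 \<le> l"
proof (rule ccontr)
  assume "\<not> 0 \<le> l"
  then obtain d where "0 < d" "\<forall>h>0. x + h \<in> {a..} \<longrightarrow> h < d \<longrightarrow> f (x + h) < f x"
    using has_real_derivative_neg_dec_right[OF assms(2)] by force
  then have "f (x + d / 2) < f x"
    using assms(3) by auto
  moreover have "f x \<le> f (x + d / 2)"
    using assms(1,3) \<open>0 < d\<close> by (auto simp: mono_on_def)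
  ultimately show False
    by simp
qed

locale balance_point =
  fixes U :: "real \<Rightarrow> real"
  assumes pos: "x \<ge> 1 \<Longrightarrow> 0 < U x"
    and mono: "mono_on {1..} U"
    and unbounded: "filterlim U at_top at_top"
    and cont: "continuous_on {1..} U"
begin

definition balance_dom :: "real set" where
  "balance_dom = {t. 1 \<le> t \<and> 1 < U t \<and> U 1 \<le> t}"

definition balance :: "real \<Rightarrow> real" where
  "balance t = (THE y. 1 \<le> y \<and> y \<le> t \<and> U (t / y) = y)"

definition balance_arg :: "real \<Rightarrow> real" where
  "balance_arg t = t / balance t"

lemma U_mono: "1 \<le> a \<Longrightarrow> a \<le> b \<Longrightarrow> U a \<le> U b"
  using mono by (auto simp: mono_on_def)

lemma balance_gap_strict_decreasing:
  assumes "0 < y" "y < z" "z \<le> t"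
  shows "U (t / z) - z < U (t / y) - y"
proof -
  have "U (t / z) \<le> U (t / y)"
    using assms by (intro U_mono divide_left_mono) auto
  with assms show ?thesis by linarith
qed

lemma balance_equation_ex1:
  assumes "t \<in> balance_dom"
  shows "\<exists>!y. 1 \<le> y \<and> y \<le> t \<and> U (t / y) = y"
proof (rule ex_ex1I)
  have t: "1 \<le> t" "1 < U t" "U 1 \<le> t"
    using assms by (auto simp: balance_dom_def)
  have "continuous_on {1..t} (\<lambda>y. U (t / y) - y)"
    by (intro continuous_intros continuous_on_compose2[OF cont]) auto
  then show "\<exists>y. 1 \<le> y \<and> y \<le> t \<and> U (t / y) = y"
    using IVT2'[of "\<lambda>y. U (t / y) - y" t 0 1] t by force
next
  fix y z
  assume "1 \<le> y \<and> y \<le> t \<and> U (t / y) = y" "1 \<le> z \<and> z \<le> t \<and> U (t / z) = z"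
  then show "y = z"
    using balance_gap_strict_decreasing[of y z t] balance_gap_strict_decreasing[of z y t]
    by (cases y z rule: linorder_cases) auto
qed

lemma
  assumes "t \<in> balance_dom"
  shows balance_ge_1: "1 \<le> balance t" and balance_le: "balance t \<le> t"
    and U_balance_arg: "U (balance_arg t) = balance t"
  using theI'[OF balance_equation_ex1[OF assms]]
  unfolding balance_def balance_arg_def by auto

lemma balance_gt_1:
  assumes "t \<in> balance_dom"
  shows "1 < balance t"
proof -
  have "balance t \<noteq> 1"
    using assms U_balance_arg[OF assms] by (auto simp: balance_dom_def balance_arg_def)
  then show ?thesis
    using balance_ge_1[OF assms] by linarith
qed

lemma balance_arg_ge_1: "t \<in> balance_dom \<Longrightarrow> 1 \<le> balance_arg t"
  using balance_le[of t] balance_ge_1[of t] by (simp add: balance_arg_def)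

lemma balance_arg_mult_U: "t \<in> balance_dom \<Longrightarrow> balance_arg t * U (balance_arg t) = t"
  using U_balance_arg[of t] balance_ge_1[of t] by (simp add: balance_arg_def)

lemma le_balance_iff:
  assumes "t \<in> balance_dom" "0 < a" "a \<le> t"
  shows "a \<le> balance t \<longleftrightarrow> a \<le> U (t / a)"
  using balance_gap_strict_decreasing[of a "balance t" t]
    balance_gap_strict_decreasing[of "balance t" a t] assms
    balance_ge_1[OF assms(1)] balance_le[OF assms(1)] U_balance_arg[OF assms(1)]
  by (cases a "balance t" rule: linorder_cases) (auto simp: balance_arg_def)

lemma less_balance_iff:
  assumes "t \<in> balance_dom" "0 < a" "a \<le> t"
  shows "a < balance t \<longleftrightarrow> a < U (t / a)"
  using balance_gap_strict_decreasing[of a "balance t" t]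
    balance_gap_strict_decreasing[of "balance t" a t] assms
    balance_ge_1[OF assms(1)] balance_le[OF assms(1)] U_balance_arg[OF assms(1)]
  by (cases a "balance t" rule: linorder_cases) (auto simp: balance_arg_def)

lemma balance_mult_U:
  assumes "1 \<le> z" "1 < U z"
  shows "z * U z \<in> balance_dom" "balance (z * U z) = U z"
proof -
  have le: "U z \<le> z * U z" "z \<le> z * U z"
    using assms mult_right_mono[of 1 z "U z"] mult_left_mono[of 1 "U z" z] by simp_all
  moreover have "U 1 \<le> U z" "U z \<le> U (z * U z)"
    using assms le by (simp_all add: U_mono)
  ultimately show dom: "z * U z \<in> balance_dom"
    using assms unfolding balance_dom_def by (intro CollectI conjI) linarith+
  show "balance (z * U z) = U z"
    unfolding balance_def
    by (rule the1_equality[OF balance_equation_ex1[OF dom]]) (use assms le in auto)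
qed

lemma balance_arg_mult_U_inverse: "1 \<le> z \<Longrightarrow> 1 < U z \<Longrightarrow> balance_arg (z * U z) = z"
  using balance_mult_U by (simp add: balance_arg_def)

lemma mono_on_balance: "mono_on balance_dom balance"
proof (rule mono_onI)
  fix s t assume st: "s \<in> balance_dom" "t \<in> balance_dom" "s \<le> t"
  have "U (s / balance s) \<le> U (t / balance s)"
    using st balance_le[of s] balance_ge_1[of s] by (intro U_mono divide_right_mono) auto
  then show "balance s \<le> balance t"
    using st balance_le[of s] balance_ge_1[of s] U_balance_arg[of s]
    by (subst le_balance_iff) (auto simp: balance_arg_def)
qed

lemma eventually_in_balance_dom: "eventually (\<lambda>t. t \<in> balance_dom) at_top"
proof -
  have "eventually (\<lambda>t. 1 < U t) at_top"
    using unbounded by (simp add: filterlim_at_top_dense)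
  moreover have "eventually (\<lambda>t. max 1 (U 1) \<le> t) at_top"
    by (rule eventually_ge_at_top)
  ultimately show ?thesis
    by eventually_elim (auto simp: balance_dom_def)
qed

lemma balance_at_top: "filterlim balance at_top at_top"
  unfolding filterlim_at_top
proof
  fix M0 :: real
  define M where "M = max M0 1"
  have M: "1 \<le> M" "M0 \<le> M" by (auto simp: M_def)
  have "filterlim (\<lambda>t. t * inverse M) at_top at_top"
    using M by (intro filterlim_at_top_mult_tendsto_pos[OF tendsto_const _ filterlim_ident]) auto
  then have "filterlim (\<lambda>t. U (t / M)) at_top at_top"
    using filterlim_compose[OF unbounded] by (simp add: divide_inverse)
  then have "eventually (\<lambda>t. M \<le> U (t / M)) at_top"
    by (simp add: filterlim_at_top)
  moreover have "eventually (\<lambda>t. M \<le> t) at_top"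
    by (rule eventually_ge_at_top)
  ultimately show "eventually (\<lambda>t. M0 \<le> balance t) at_top"
    using eventually_in_balance_dom
  proof eventually_elim
    case (elim t)
    then have "M \<le> balance t" using M by (subst le_balance_iff) auto
    with M show ?case by linarith
  qed
qed

lemma balance_arg_at_top: "filterlim balance_arg at_top at_top"
  unfolding filterlim_at_top
proof
  fix M0 :: real
  define M where "M = max M0 1"
  have M: "1 \<le> M" "M0 \<le> M" by (auto simp: M_def)
  have "eventually (\<lambda>t. U M < balance t) at_top"
    using balance_at_top by (simp add: filterlim_at_top_dense)
  then show "eventually (\<lambda>t. M0 \<le> balance_arg t) at_top"
    using eventually_in_balance_dom
  proof eventually_elim
    case (elim t)
    have "M < balance_arg t"
    proof (rule ccontr)
      assume "\<not> M < balance_arg t"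
      then have "U (balance_arg t) \<le> U M"
        using balance_arg_ge_1[OF elim(2)] by (intro U_mono) auto
      with elim U_balance_arg show False by fastforce
    qed
    with M show ?case by linarith
  qed
qed

lemma eventually_mult_in_balance_dom:
  assumes "0 < x"
  shows "eventually (\<lambda>t. t \<in> balance_dom \<and> t * x \<in> balance_dom) at_top"
proof -
  have "filterlim (\<lambda>t. t * x) at_top at_top"
    using assms by (intro filterlim_at_top_mult_tendsto_pos[OF tendsto_const _ filterlim_ident])
  then show ?thesis
    using eventually_conj[OF eventually_in_balance_dom
        eventually_compose_filterlim[OF eventually_in_balance_dom]] by blast
qed

lemma balance_arg_scale:
  assumes "t \<in> balance_dom" "0 < a"
  shows "balance_arg t * (x / a) = t * x / (a * balance t)"
  using balance_gt_1[OF assms(1)] assms(2) by (simp add: balance_arg_def)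

lemma eventually_balance_mult_less:
  assumes "0 < x" "0 < a"
    and "eventually (\<lambda>s. U (s * (x / a)) < a * U s) at_top"
  shows "eventually (\<lambda>t. balance (t * x) < a * balance t) at_top"
  using eventually_compose_filterlim[OF assms(3) balance_arg_at_top]
    eventually_mult_in_balance_dom[OF assms(1)]
proof eventually_elim
  case (elim t)
  define A where "A = a * balance t"
  have A: "0 < A" using assms(2) balance_gt_1[of t] elim by (simp add: A_def)
  have "U (t * x / A) < A"
    using elim U_balance_arg[of t] balance_arg_scale[of t a x] assms(2) by (simp add: A_def)
  then show ?case
    using A elim le_balance_iff[of "t * x" A] balance_le[of "t * x"]
    unfolding A_def[symmetric] by (cases "A \<le> t * x") auto
qed

lemma eventually_balance_mult_greater:
  assumes "0 < x" "0 < a"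
    and "eventually (\<lambda>s. a * U s < U (s * (x / a))) at_top"
  shows "eventually (\<lambda>t. a * balance t < balance (t * x)) at_top"
proof -
  have "filterlim (\<lambda>s. s * (x / a)) at_top at_top"
    using assms by (intro filterlim_at_top_mult_tendsto_pos[OF tendsto_const _ filterlim_ident]) auto
  then have "eventually (\<lambda>s. 1 \<le> s * (x / a)) at_top"
    by (simp add: filterlim_at_top)
  with assms(3) have "eventually (\<lambda>s. a * U s < U (s * (x / a)) \<and> 1 \<le> s * (x / a)) at_top"
    by eventually_elim simp
  from eventually_compose_filterlim[OF this balance_arg_at_top]
    eventually_mult_in_balance_dom[OF assms(1)]
  show ?thesis
  proof eventually_elim
    case (elim t)
    define A where "A = a * balance t"
    have A: "0 < A" using assms(2) balance_gt_1[of t] elim by (simp add: A_def)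
    have "balance_arg t * (x / a) = t * x / A"
      using balance_arg_scale elim assms(2) by (simp add: A_def)
    with elim(1) have "A < U (t * x / A) \<and> 1 \<le> t * x / A"
      using U_balance_arg[of t] elim(2) by (simp add: A_def)
    then show ?case
      using A elim less_balance_iff[of "t * x" A] unfolding A_def[symmetric] by (simp add: le_divide_eq)
  qed
qed

lemma balance_ratio_tendsto:
  assumes U_ratio: "\<And>c. 0 < c \<Longrightarrow> ((\<lambda>s. U (s * c) / U s) \<longlongrightarrow> c powr \<gamma>) at_top"
    and "0 \<le> \<gamma>" "0 < x"
  shows "((\<lambda>t. balance (t * x) / balance t) \<longlongrightarrow> x powr (\<gamma> / (\<gamma> + 1))) at_top"
proof -
  have U_pos: "eventually (\<lambda>s. 0 < U s) at_top"
    using eventually_ge_at_top[of 1] by eventually_elim (rule pos)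
  have balance_pos: "eventually (\<lambda>t. 0 < balance t) at_top"
    using eventually_in_balance_dom by eventually_elim (use balance_gt_1 in fastforce)
  show ?thesis
  proof (rule order_tendstoI)
    fix a assume a: "x powr (\<gamma> / (\<gamma> + 1)) < a"
    moreover have "0 < x powr (\<gamma> / (\<gamma> + 1))"
      using assms(3) by simp
    ultimately have "0 < a"
      by linarith
    have "eventually (\<lambda>s. U (s * (x / a)) / U s < a) at_top"
      using order_tendstoD(2)[OF U_ratio powr_ratio_less] a \<open>0 < a\<close> assms by auto
    with U_pos have "eventually (\<lambda>s. U (s * (x / a)) < a * U s) at_top"
      by eventually_elim (simp add: divide_less_eq)
    from eventually_balance_mult_less[OF assms(3) \<open>0 < a\<close> this] balance_pos
    show "eventually (\<lambda>t. balance (t * x) / balance t < a) at_top"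
      by eventually_elim (simp add: divide_less_eq)
  next
    fix a assume a: "a < x powr (\<gamma> / (\<gamma> + 1))"
    show "eventually (\<lambda>t. a < balance (t * x) / balance t) at_top"
    proof (cases "0 < a")
      case False
      from eventually_mult_in_balance_dom[OF assms(3)] show ?thesis
      proof eventually_elim
        case (elim t)
        then have "0 < balance (t * x) / balance t"
          using balance_gt_1[of t] balance_gt_1[of "t * x"] by simp
        with False show ?case by linarith
      qed
    next
      case True
      have "eventually (\<lambda>s. a < U (s * (x / a)) / U s) at_top"
        using order_tendstoD(1)[OF U_ratio powr_ratio_greater] a True assms by auto
      with U_pos have "eventually (\<lambda>s. a * U s < U (s * (x / a))) at_top"
        by eventually_elim (simp add: less_divide_eq)
      from eventually_balance_mult_greater[OF assms(3) True this] balance_pos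
      show ?thesis
        by eventually_elim (simp add: less_divide_eq)
    qed
  qed
qed

lemma regularly_varying_balance:
  assumes "regularly_varying \<gamma> U" "0 \<le> \<gamma>"
  shows "regularly_varying (\<gamma> / (\<gamma> + 1)) balance"
  unfolding regularly_varying_def
proof (intro conjI allI impI)
  obtain N where "\<forall>t\<ge>N. t \<in> balance_dom"
    using eventually_in_balance_dom by (auto simp: eventually_at_top_linorder)
  then obtain a where a: "1 \<le> a" "{a..} \<subseteq> balance_dom"
    by (intro that[of "max N 1"]) auto
  have "balance \<in> borel_measurable (restrict_space borel {a..})"
    using mono_on_subset[OF mono_on_balance a(2)] by (rule borel_measurable_mono_on_fnc)
  then have "balance \<in> borel_measurable (restrict_space lborel {a..})"
    by (simp add: measurable_def space_restrict_space sets_restrict_space)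
  moreover have "\<forall>t\<ge>a. balance t > 0"
    using a balance_gt_1 by fastforce
  ultimately show "\<exists>a>0. (\<forall>t\<ge>a. balance t > 0) \<and> balance \<in> borel_measurable (restrict_space lborel {a..})"
    using a(1) by (intro exI[of _ a]) auto
next
  fix x :: real assume "0 < x"
  with assms show "((\<lambda>t. balance (t * x) / balance t) \<longlongrightarrow> x powr (\<gamma> / (\<gamma> + 1))) at_top"
    by (intro balance_ratio_tendsto) (auto simp: regularly_varying_def)
qed

lemma balance_powr_representation:
  fixes L :: "real \<Rightarrow> real"
  assumes U_eq: "\<And>t. 1 \<le> t \<Longrightarrow> U t = t powr \<gamma> * L t" and "t \<in> balance_dom"
  shows "0 < L (balance_arg t)"
    and "balance t = balance_arg t powr \<gamma> * L (balance_arg t)"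
    and "t = balance_arg t powr (1 + \<gamma>) * L (balance_arg t)"
proof -
  define w where "w = balance_arg t"
  have w: "1 \<le> w" "U w = balance t" "w * U w = t"
    using assms(2) balance_arg_ge_1 U_balance_arg balance_arg_mult_U by (auto simp: w_def)
  show "balance t = balance_arg t powr \<gamma> * L (balance_arg t)"
    using w(2) U_eq[OF w(1)] by (simp add: w_def)
  have "0 < w powr \<gamma> * L w"
    using w balance_gt_1[OF assms(2)] U_eq[OF w(1)] by simp
  then show "0 < L (balance_arg t)"
    using w(1) by (simp add: zero_less_mult_iff w_def)
  have "t = w * (w powr \<gamma> * L w)"
    using w U_eq[OF w(1)] by simp
  then show "t = balance_arg t powr (1 + \<gamma>) * L (balance_arg t)"
    using w(1) by (simp add: powr_add w_def)
qed

lemma debruijn_conjugate_tendsto_balance_arg: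
  fixes L L1s :: "real \<Rightarrow> real"
  assumes "0 \<le> \<gamma>" and U_eq: "\<And>t. 1 \<le> t \<Longrightarrow> U t = t powr \<gamma> * L t"
    and conj: "debruijn_conjugate (\<lambda>t. L (t powr (1 / (1 + \<gamma>)))) L1s"
  shows "((\<lambda>t. L (balance_arg t) * L1s t) \<longlongrightarrow> 1) at_top"
proof -
  define v where "v t = balance_arg t powr (1 + \<gamma>)" for t
  have v: "v t powr (1 / (1 + \<gamma>)) = balance_arg t" "v t * L (balance_arg t) = t"
    if "t \<in> balance_dom" for t
    using assms(1) balance_arg_ge_1[OF that] balance_powr_representation(3)[OF U_eq that]
    by (simp_all add: v_def powr_powr)
  have "filterlim v at_top at_top"
  proof (rule filterlim_at_top_mono[OF balance_arg_at_top])
    show "eventually (\<lambda>t. balance_arg t \<le> v t) at_top"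
      using eventually_in_balance_dom
    proof eventually_elim
      case (elim t)
      then have "balance_arg t powr 1 \<le> balance_arg t powr (1 + \<gamma>)"
        using balance_arg_ge_1 assms(1) by (intro powr_mono) auto
      then show ?case
        using balance_arg_ge_1[OF elim] by (simp add: v_def)
    qed
  qed
  moreover have "((\<lambda>x. L (x powr (1 / (1 + \<gamma>))) * L1s (x * L (x powr (1 / (1 + \<gamma>))))) \<longlongrightarrow> 1) at_top"
    using conj by (simp add: debruijn_conjugate_def)
  ultimately have "((\<lambda>t. L (v t powr (1 / (1 + \<gamma>))) * L1s (v t * L (v t powr (1 / (1 + \<gamma>)))))
      \<longlongrightarrow> 1) at_top"
    by (rule filterlim_compose[rotated])
  then show ?thesis
    by (rule Lim_transform_eventually) (use eventually_in_balance_dom in \<open>eventually_elim, use v in auto\<close>)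
qed

lemma balance_asymp_equiv_debruijn:
  fixes L L1s :: "real \<Rightarrow> real"
  assumes "0 \<le> \<gamma>" and U_eq: "\<And>t. 1 \<le> t \<Longrightarrow> U t = t powr \<gamma> * L t"
    and conj: "debruijn_conjugate (\<lambda>t. L (t powr (1 / (1 + \<gamma>)))) L1s"
  shows "balance \<sim>[at_top] (\<lambda>t. t powr (\<gamma> / (\<gamma> + 1)) * L1s t powr (- 1 / (1 + \<gamma>)))"
proof (rule asymp_equivI')
  have "((\<lambda>t. (L (balance_arg t) * L1s t) powr (1 / (1 + \<gamma>))) \<longlongrightarrow> 1) at_top"
    using tendsto_powr[OF debruijn_conjugate_tendsto_balance_arg[OF assms] tendsto_const] by simp
  moreover obtain a where "\<forall>t\<ge>a. 0 < L1s t"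
    using conj by (auto simp: debruijn_conjugate_def regularly_varying_def)
  then have "eventually (\<lambda>t. 0 < L1s t) at_top"
    by (auto simp: eventually_at_top_linorder)
  then have "eventually (\<lambda>t. (L (balance_arg t) * L1s t) powr (1 / (1 + \<gamma>))
      = balance t / (t powr (\<gamma> / (\<gamma> + 1)) * L1s t powr (- 1 / (1 + \<gamma>)))) at_top"
    using eventually_in_balance_dom
  proof eventually_elim
    case (elim t)
    note rep = balance_powr_representation[OF U_eq elim(2)]
    have "0 < balance_arg t"
      using balance_arg_ge_1[OF elim(2)] by simp
    from powr_asymp_ratio_eq[OF this rep(1) elim(1) assms(1)] show ?case
      using rep(2) arg_cong[OF rep(3), of "\<lambda>s. s powr (\<gamma> / (\<gamma> + 1))"] by simp
  qed
  ultimately show "((\<lambda>t. balance t / (t powr (\<gamma> / (\<gamma> + 1)) * L1s t powr (- 1 / (1 + \<gamma>))))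
      \<longlongrightarrow> 1) at_top"
    by (rule Lim_transform_eventually)
qed

lemma isCont_U: "1 < x \<Longrightarrow> isCont U x"
  using continuous_on_interior[OF cont] by simp

lemma balance_arg_gt_1:
  assumes "t \<in> interior balance_dom"
  shows "1 < balance_arg t"
proof -
  have t: "t \<in> balance_dom"
    using assms interior_subset by blast
  obtain e where "0 < e" "ball t e \<subseteq> balance_dom"
    using assms mem_interior by blast
  then have "t - e / 2 \<in> balance_dom"
    by (auto simp: dist_real_def)
  with \<open>0 < e\<close> have "U 1 < t"
    by (auto simp: balance_dom_def)
  then have "balance_arg t \<noteq> 1"
    using U_balance_arg[OF t] balance_arg_mult_U[OF t] by auto
  then show ?thesis
    using balance_arg_ge_1[OF t] by linarith
qed

lemma isCont_balance_arg:
  assumes "t \<in> interior balance_dom"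
  shows "isCont balance_arg t"
proof -
  have t: "t \<in> balance_dom"
    using assms interior_subset by blast
  define p where "p = balance_arg t"
  have p: "1 < p" "1 < U p"
    using balance_arg_gt_1[OF assms] balance_gt_1[OF t] U_balance_arg[OF t] by (auto simp: p_def)
  have "eventually (\<lambda>z. 1 < U z) (at p)"
    using order_tendstoD(1)[OF isCont_U[OF p(1), unfolded isCont_def] p(2)] .
  then obtain d where d: "0 < d" "\<And>z. z \<noteq> p \<Longrightarrow> dist z p < d \<Longrightarrow> 1 < U z"
    by (auto simp: eventually_at)
  define e where "e = min (d / 2) ((p - 1) / 2)"
  have near: "1 < z \<and> 1 < U z" if "\<bar>z - p\<bar> \<le> e" for z
  proof -
    have "1 < z" "\<bar>z - p\<bar> < d"
      using that d(1) p(1) abs_ge_minus_self[of "z - p"] by (auto simp: e_def field_simps)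
    then show ?thesis
      using d(2)[of z] p(2) by (cases "z = p") (auto simp: dist_real_def)
  qed
  have "isCont balance_arg (p * U p)"
  proof (rule isCont_inverse_function[where f = "\<lambda>z. z * U z"])
    show "0 < e"
      using d p by (simp add: e_def)
    show "balance_arg (z * U z) = z" if "\<bar>z - p\<bar> \<le> e" for z
      using near[OF that] by (intro balance_arg_mult_U_inverse) auto
    show "isCont (\<lambda>z. z * U z) z" if "\<bar>z - p\<bar> \<le> e" for z
      using near[OF that] isCont_U by (intro continuous_intros) auto
  qed
  then show ?thesis
    using balance_arg_mult_U[OF t] by (simp add: p_def)
qed

end

locale balance_point_C1 = balance_point +
  fixes U' :: "real \<Rightarrow> real"
  assumes U'_cont: "continuous_on {1..} U'"
    and U_deriv: "1 \<le> x \<Longrightarrow> (U has_real_derivative U' x) (at x within {1..})"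
begin

lemma U_deriv_at: "1 < x \<Longrightarrow> (U has_real_derivative U' x) (at x)"
  using U_deriv[of x] at_within_interior[of x "{1..}"] by simp

lemma isCont_U': "1 < x \<Longrightarrow> isCont U' x"
  using continuous_on_interior[OF U'_cont] by simp

lemma U'_nonneg: "1 \<le> x \<Longrightarrow> 0 \<le> U' x"
  using mono_on_deriv_nonneg[OF mono U_deriv] .

definition balance_deriv :: "real \<Rightarrow> real" where
  "balance_deriv t = U' (balance_arg t) / (U (balance_arg t) + balance_arg t * U' (balance_arg t))"

lemma balance_arg_has_derivative:
  assumes "t \<in> interior balance_dom"
  shows "(balance_arg has_real_derivative
      inverse (U (balance_arg t) + balance_arg t * U' (balance_arg t))) (at t)"
proof (rule has_field_derivative_inverse_basic[where f = "\<lambda>z. z * U z"])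
  define p where "p = balance_arg t"
  have p: "1 < p" "0 < U p" "0 \<le> U' p"
    using balance_arg_gt_1[OF assms] pos U'_nonneg by (auto simp: p_def)
  show "((\<lambda>z. z * U z) has_real_derivative U p + p * U' p) (at (balance_arg t))"
    using DERIV_mult[OF DERIV_ident U_deriv_at[OF p(1)]] by (simp add: p_def mult.commute)
  have "0 \<le> p * U' p"
    using p by simp
  with p show "U p + p * U' p \<noteq> 0"
    by linarith
  show "balance_arg z * U (balance_arg z) = z" if "z \<in> interior balance_dom" for z
    using that interior_subset balance_arg_mult_U by blast
qed (use assms isCont_balance_arg in auto)

lemma balance_has_derivative:
  assumes "t \<in> interior balance_dom"
  shows "(balance has_real_derivative balance_deriv t) (at t)"
proof (rule has_field_derivative_transform_within_open)
  show "((\<lambda>s. U (balance_arg s)) has_real_derivative balance_deriv t) (at t)"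
    using DERIV_chain2[OF U_deriv_at[OF balance_arg_gt_1[OF assms]] balance_arg_has_derivative[OF assms]]
    by (simp add: balance_deriv_def divide_inverse)
  show "U (balance_arg s) = balance s" if "s \<in> interior balance_dom" for s
    using that interior_subset U_balance_arg by blast
qed (use assms in auto)

lemma isCont_balance_deriv:
  assumes "t \<in> interior balance_dom"
  shows "isCont balance_deriv t"
proof -
  define p where "p = balance_arg t"
  have p: "1 < p" "0 < U p" "0 \<le> U' p"
    using balance_arg_gt_1[OF assms] pos U'_nonneg by (auto simp: p_def)
  have cont_arg: "isCont balance_arg t"
    by (rule isCont_balance_arg[OF assms])
  have "isCont (\<lambda>s. U (balance_arg s)) t" "isCont (\<lambda>s. U' (balance_arg s)) t"
    using isCont_o2[OF cont_arg isCont_U] isCont_o2[OF cont_arg isCont_U'] p by (auto simp: p_def)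
  moreover have "0 \<le> p * U' p"
    using p by simp
  with p have "U p + p * U' p \<noteq> 0"
    by linarith
  ultimately show ?thesis
    unfolding balance_deriv_def using cont_arg by (intro continuous_intros) (auto simp: p_def)
qed

end

theorem lemma1:
  fixes U :: "real \<Rightarrow> real" and \<gamma> :: real
  assumes pos: "\<forall>x\<ge>1. U x > 0"
    and mono: "mono_on {1..} U"
    and infty: "filterlim U at_top at_top"
    and C1: "\<exists>U'. continuous_on {1..} U' \<and>
               (\<forall>x\<ge>1. (U has_real_derivative U' x) (at x within {1..}))"
    and rv: "regularly_varying \<gamma> U"
    and gam: "\<gamma> \<ge> 0"
  defines "D \<equiv> {t. 1 \<le> t \<and> 1 < U t \<and> U 1 \<le> t}"
    and "m \<equiv> (\<lambda>t. THE y. 1 \<le> y \<and> y \<le> t \<and> U (t / y) = y)"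
  shows "(\<forall>t\<in>D. \<exists>!y. 1 \<le> y \<and> y \<le> t \<and> U (t / y) = y) \<and> mono_on D m
     \<and> (\<exists>m'. continuous_on (interior D) m' \<and>
             (\<forall>t\<in>interior D. (m has_real_derivative m' t) (at t)))
     \<and> filterlim m at_top at_top \<and> filterlim (\<lambda>t. t / m t) at_top at_top
     \<and> regularly_varying (\<gamma> / (\<gamma> + 1)) m
     \<and> (\<forall>L L1s. slowly_varying L \<and> (\<forall>t\<ge>1. U t = t powr \<gamma> * L t)
          \<and> debruijn_conjugate (\<lambda>t. L (t powr (1 / (1 + \<gamma>)))) L1s
          \<longrightarrow> m \<sim>[at_top] (\<lambda>t. t powr (\<gamma> / (\<gamma> + 1)) * L1s t powr (- 1 / (1 + \<gamma>))))"
proof -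
  obtain U' where U': "continuous_on {1..} U'"
    "\<forall>x\<ge>1. (U has_real_derivative U' x) (at x within {1..})"
    using C1 by blast
  then have "continuous_on {1..} U"
    by (intro DERIV_continuous_on) auto
  then interpret balance_point_C1 U U'
    using pos mono infty U' by unfold_locales auto
  have D: "D = balance_dom"
    unfolding D_def balance_dom_def ..
  have m: "m = balance"
    unfolding m_def balance_def[abs_def] ..
  have "\<exists>m'. continuous_on (interior D) m' \<and> (\<forall>t\<in>interior D. (m has_real_derivative m' t) (at t))"
    using isCont_balance_deriv balance_has_derivative unfolding D m
    by (intro exI[of _ balance_deriv] conjI continuous_at_imp_continuous_on) auto
  moreover have "filterlim (\<lambda>t. t / m t) at_top at_top"
    using balance_arg_at_top unfolding m by (simp add: balance_arg_def[abs_def])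
  ultimately show ?thesis
    unfolding D m
    using balance_equation_ex1 mono_on_balance balance_at_top
      regularly_varying_balance[OF rv gam] balance_asymp_equiv_debruijn[OF gam]
    by blast
qed

end
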